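(* Run MUDAN on a reported profile $\theta'$ with nonempty final winner set $W$, and let $w^*$ be the last buyer added to $W$. If a buyer $y$ has reported valuation strictly larger than the reported valuation of every winner, i.e. $v'_y>v'_w$ for all $w\in W$, then $w^*$ is critical for $y$: every directed path from $s$ to $y$ in $G_{\theta'}$ passes through $w^*$. In particular, under truthful reporting ($\theta'=\theta$), such a $y$ does not belong to $B^*$, the set of buyers for which $w^*$ is not critical.
   Context: Single-demand model. A seller $s$ has $m\ge 1$ identical items. Buyers $B=\{1,\dots,n\}$; buyer $i$ has a true valuation $v_i\in\mathbb{R}_{\ge0}$ and true neighbour set $r_i\subseteq B$; the seller has a fixed neighbour set $r_s\subseteq B$. Buyer $i$ reports $(v'_i,r'_i)$ with $v'_i\ge 0$, $r'_i\subseteq r_i$; the truthful profile is $\theta$. The profile graph $G_{\theta'}$ is the directed graph on $\{s\}\cup B$ with an edge $(x,y)$ iff $y\in r'_x$ (for $x=s$ use $r_s$). A buyer $w$ is critical for a buyer $i$ if every directed path from $s$ to $i$ in $G_{\theta'}$ passes through $w$. Priority rule: each buyer $i$ is given a priority $\sigma_i$ that is a function of its reported neighbour set $r'_i$ only (e.g. $\sigma_i=|r'_i|$), independent of all reported valuations and non-decreasing with respect to inclusion of $r'_i$; ties are broken by a fixed total order on buyers. MUDAN, run on a reported profile $\theta'$. It maintains an explored set $A\subseteq B$, a winner set $W\subseteq A$, remaining supply $m'=m-|W|$, and tentative payments. For current $A,W$ the potential-winner set $P(A,W)$ is: $P=A$ if $|A\setminus W|\le m'$; otherwise $P=W\cup\{$the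 $m'$ buyers of $A\setminus W$ with highest reported valuations$\}$ (ties broken by a fixed total order). Buyers in $A\setminus P$ are called exhausted. Initialise $A=r_s$, $W=\varnothing$, and repeat: (1) Closure: while some buyer $x\in W\cup(A\setminus P(A,W))$ (with $P$ recomputed from the current $A,W$) has $r'_x\not\subseteq A$, set $A\leftarrow A\cup r'_x$. (2) Let $P=P(A,W)$; if $P\setminus W=\varnothing$, stop. (3) Let $w$ be the buyer of $P\setminus W$ with highest priority; set its tentative payment $\hat p_w$ to the $(m'+1)$-th highest reported valuation in $A\setminus W$ (current $m'$, before adding $w$), or $0$ if $|A\setminus W|\le m'$; add $w$ to $W$. Output: every $w\in W$ gets an item and pays $\hat p_w$; other buyers get nothing and pay $0$. *)

theory Defs
  imports Complex_Main
begin

text \<open>Buyers have an arbitrary type 'b with a linear order; this linear order is the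
fixed total order used for all tie-breaking (smaller in the order = preferred).
Vertices of the profile graph are of type 'b option: None is the seller s,
Some i is buyer i.\<close>

definition pg_edge :: "'b set \<Rightarrow> ('b \<Rightarrow> 'b set) \<Rightarrow> 'b option \<Rightarrow> 'b option \<Rightarrow> bool" where
  "pg_edge rs r' x y =
     (case (x, y) of
        (None, Some b) \<Rightarrow> b \<in> rs
      | (Some a, Some b) \<Rightarrow> b \<in> r' a
      | _ \<Rightarrow> False)"

definition pg_path :: "'b set \<Rightarrow> ('b \<Rightarrow> 'b set) \<Rightarrow> 'b \<Rightarrow> 'b option list \<Rightarrow> bool" where
  "pg_path rs r' i p =
     (p \<noteq> [] \<and> hd p = None \<and> last p = Some i \<and> distinct p \<and>
      (\<forall>k. Suc k < length p \<longrightarrow> pg_edge rs r' (p ! k) (p ! Suc k)))"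

definition critical :: "'b set \<Rightarrow> ('b \<Rightarrow> 'b set) \<Rightarrow> 'b \<Rightarrow> 'b \<Rightarrow> bool" where
  "critical rs r' w i = (\<forall>p. pg_path rs r' i p \<longrightarrow> Some w \<in> set p)"

definition Bstar :: "'b set \<Rightarrow> 'b set \<Rightarrow> ('b \<Rightarrow> 'b set) \<Rightarrow> 'b \<Rightarrow> 'b set" where
  "Bstar B rs r' w = {i \<in> B. \<not> critical rs r' w i}"

definition val_better :: "('b::linorder \<Rightarrow> real) \<Rightarrow> 'b \<Rightarrow> 'b \<Rightarrow> bool" where
  "val_better v z x = (v z > v x \<or> (v z = v x \<and> z < x))"

definition top_k :: "('b::linorder \<Rightarrow> real) \<Rightarrow> nat \<Rightarrow> 'b set \<Rightarrow> 'b set" where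
  "top_k v k S = {x \<in> S. card {z \<in> S. val_better v z x} < k}"

text \<open>Potential-winner set P(A,W), with m' the remaining supply.\<close>
definition pot_win :: "('b::linorder \<Rightarrow> real) \<Rightarrow> nat \<Rightarrow> 'b set \<Rightarrow> 'b set \<Rightarrow> 'b set" where
  "pot_win v m' A W =
     (if card (A - W) \<le> m' then A else W \<union> top_k v m' (A - W))"

text \<open>(k+1)-th highest valuation in S (k counted from 0), 0 if |S| <= k.\<close>
definition kth_price :: "('b::linorder \<Rightarrow> real) \<Rightarrow> nat \<Rightarrow> 'b set \<Rightarrow> real" where
  "kth_price v k S =
     (if card S \<le> k then 0 else rev (sort (map v (sorted_list_of_set S))) ! k)"

definition prio_max :: "('b set \<Rightarrow> real) \<Rightarrow> ('b \<Rightarrow> 'b set) \<Rightarrow> 'b::linorder set \<Rightarrow> 'b \<Rightarrow> bool" where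
  "prio_max \<sigma> r' S w =
     (w \<in> S \<and> (\<forall>z\<in>S. z \<noteq> w \<longrightarrow>
        \<sigma> (r' z) < \<sigma> (r' w) \<or> (\<sigma> (r' z) = \<sigma> (r' w) \<and> w < z)))"

text \<open>State: explored set A, winners as a list in order of addition, tentative payments.\<close>
type_synonym 'b mstate = "'b set \<times> 'b list \<times> ('b \<Rightarrow> real)"

definition closure_cand :: "nat \<Rightarrow> ('b::linorder \<Rightarrow> real) \<Rightarrow> ('b \<Rightarrow> 'b set) \<Rightarrow> 'b set \<Rightarrow> 'b list \<Rightarrow> 'b \<Rightarrow> bool" where
  "closure_cand m v r' A ws x =
     (x \<in> set ws \<union> (A - pot_win v (m - length ws) A (set ws)) \<and> \<not> r' x \<subseteq> A)"

inductive mudan_step ::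
  "nat \<Rightarrow> ('b set \<Rightarrow> real) \<Rightarrow> ('b::linorder \<Rightarrow> real) \<Rightarrow> ('b \<Rightarrow> 'b set) \<Rightarrow> 'b mstate \<Rightarrow> 'b mstate \<Rightarrow> bool"
  for m \<sigma> v r' where
  closure: "closure_cand m v r' A ws x \<Longrightarrow>
     mudan_step m \<sigma> v r' (A, ws, pay) (A \<union> r' x, ws, pay)"
| add_winner: "\<lbrakk> \<forall>x. \<not> closure_cand m v r' A ws x;
     prio_max \<sigma> r' (pot_win v (m - length ws) A (set ws) - set ws) w \<rbrakk> \<Longrightarrow>
     mudan_step m \<sigma> v r' (A, ws, pay)
       (A, ws @ [w], pay(w := kth_price v (m - length ws) (A - set ws)))"

definition mudan_init :: "'b set \<Rightarrow> 'b mstate" where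
  "mudan_init rs = (rs, [], (\<lambda>_. 0))"

definition mudan_final ::
  "nat \<Rightarrow> ('b set \<Rightarrow> real) \<Rightarrow> 'b set \<Rightarrow> ('b::linorder \<Rightarrow> real) \<Rightarrow> ('b \<Rightarrow> 'b set) \<Rightarrow> 'b mstate \<Rightarrow> bool" where
  "mudan_final m \<sigma> rs v r' st =
     (case st of (A, ws, pay) \<Rightarrow>
        (mudan_step m \<sigma> v r')\<^sup>*\<^sup>* (mudan_init rs) st \<and>
        (\<forall>x. \<not> closure_cand m v r' A ws x) \<and>
        pot_win v (m - length ws) A (set ws) - set ws = {})"

end

theory Submission imports Defs begin

text \<open>When MUDAN stops, the explored set is closed under edges, so it contains y; as y is
unassigned, no supply is left, since otherwise the best unassigned explored buyer would still
be a potential winner. Hence when w* was chosen only one unit remained and w* was the unique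
potential winner, i.e. the best unassigned explored buyer at that moment, all others being
exhausted. Winners and exhausted buyers had all their neighbours explored, so the explored set
at that moment is closed under edges out of every buyer except w*. A path from s avoiding w*
therefore stays inside it, and its endpoint y would be an unassigned explored buyer beating w*
in valuation, which is impossible.\<close>

lemma pg_path_last_in_closed:
  assumes "pg_path rs r' y p" "rs \<subseteq> C"
    and "\<And>a. Some a \<in> set p \<Longrightarrow> a \<in> C \<Longrightarrow> r' a \<subseteq> C"
  shows "y \<in> C"
proof -
  have "b \<in> C" if "k < length p" "p ! k = Some b" for k b
    using that
  proof (induction k arbitrary: b)
    case 0
    then show ?case using assms(1) by (cases p) (auto simp: pg_path_def)
  next
    case (Suc k)
    have edge: "pg_edge rs r' (p ! k) (p ! Suc k)"
      using assms(1) Suc.prems(1) by (auto simp: pg_path_def)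
    show ?case
    proof (cases "p ! k")
      case None
      then show ?thesis using edge Suc.prems assms(2) by (auto simp: pg_edge_def)
    next
      case (Some a)
      have "Some a \<in> set p" using Some Suc.prems(1) by (metis Suc_lessD nth_mem)
      moreover have "a \<in> C" using Suc.IH Some Suc.prems(1) by simp
      ultimately show ?thesis using edge Suc.prems assms(3) Some by (auto simp: pg_edge_def)
    qed
  qed
  moreover have "length p - 1 < length p" "p ! (length p - 1) = Some y"
    using assms(1) by (auto simp: pg_path_def last_conv_nth)
  ultimately show ?thesis by blast
qed

lemma val_better_total:
  "x \<noteq> z \<Longrightarrow> val_better v x z \<or> val_better v z (x::'b::linorder)"
  unfolding val_better_def by (auto simp: neq_iff)

lemma ex_val_best:
  fixes v :: "'b::linorder \<Rightarrow> real"
  assumes "finite S" "S \<noteq> {}"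
  shows "\<exists>x\<in>S. \<forall>z\<in>S. \<not> val_better v z x"
proof -
  define T where "T = {x\<in>S. v x = Max (v ` S)}"
  have "Max (v ` S) \<in> v ` S" using assms by simp
  then have "T \<noteq> {}" "finite T" using assms(1) by (auto simp: T_def)
  then have "Min T \<in> T" by simp
  moreover have "\<not> val_better v z (Min T)" if "z \<in> S" for z
  proof -
    have "v z \<le> Max (v ` S)" using assms(1) that by simp
    moreover have "v z = Max (v ` S) \<Longrightarrow> Min T \<le> z" using that \<open>finite T\<close> by (simp add: T_def)
    ultimately show ?thesis using \<open>Min T \<in> T\<close> by (auto simp: val_better_def T_def)
  qed
  ultimately show ?thesis by (auto simp: T_def)
qed

lemma top_k_subset: "top_k v k S \<subseteq> S"
  by (auto simp: top_k_def)

lemma top_k_nonempty: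
  fixes v :: "'b::linorder \<Rightarrow> real"
  assumes "finite S" "S \<noteq> {}" "0 < k"
  shows "top_k v k S \<noteq> {}"
proof -
  obtain x where "x \<in> S" "\<forall>z\<in>S. \<not> val_better v z x"
    using ex_val_best[OF assms(1,2)] by blast
  then have "{z \<in> S. val_better v z x} = {}" by blast
  then have "card {z \<in> S. val_better v z x} = 0" by (simp only: card.empty)
  then have "x \<in> top_k v k S" using \<open>x \<in> S\<close> assms(3) by (simp add: top_k_def)
  then show ?thesis by blast
qed

lemma top_one_is_best:
  assumes "k \<le> 1" "finite S" "u \<in> top_k v k S" "z \<in> S"
  shows "\<not> val_better v z u"
proof -
  have "card {z \<in> S. val_better v z u} = 0" using assms(1,3) by (simp add: top_k_def)
  then show ?thesis using assms(2,4) by simp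
qed

lemma pot_win_subset: "W \<subseteq> A \<Longrightarrow> pot_win v k A W \<subseteq> A"
  using top_k_subset[of v k "A - W"] by (auto simp: pot_win_def)

lemma pot_win_winners_only_imp_no_supply:
  fixes v :: "'b::linorder \<Rightarrow> real"
  assumes "finite A" "y \<in> A - W" "pot_win v k A W - W = {}"
  shows "k = 0"
proof (rule ccontr)
  assume "k \<noteq> 0"
  show False
  proof (cases "card (A - W) \<le> k")
    case True
    then show False using assms(2,3) by (auto simp: pot_win_def)
  next
    case False
    then show False
      using assms top_k_nonempty[of "A - W" k v] top_k_subset[of v k "A - W"] \<open>k \<noteq> 0\<close>
      by (auto simp: pot_win_def)
  qed
qed

lemma single_potential_winner:
  fixes v :: "'b::linorder \<Rightarrow> real"
  assumes "finite A" "k \<le> 1" "w \<in> pot_win v k A W - W" "x \<in> A - W" "x \<noteq> w"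
  shows "x \<notin> pot_win v k A W \<and> \<not> val_better v x w"
proof (cases "card (A - W) \<le> k")
  case True
  then have "w \<in> A - W" using assms(3) by (simp add: pot_win_def)
  moreover have "card (A - W) \<le> Suc 0" using True assms(2) by simp
  ultimately show ?thesis
    using assms(1,4,5) card_le_Suc0_iff_eq[of "A - W"] by blast
next
  case False
  then have P: "pot_win v k A W = W \<union> top_k v k (A - W)" by (simp add: pot_win_def)
  have w_best: "\<not> val_better v x w"
    using top_one_is_best[of k "A - W" w v x] assms P by blast
  have "\<not> val_better v w x" if "x \<in> top_k v k (A - W)"
    using top_one_is_best[of k "A - W" x v w] that assms top_k_subset P by blast
  then show ?thesis using w_best val_better_total[of x w v] assms(4,5) P by blast
qed

lemma no_closure_cand_imp_neighbours_explored:
  "\<forall>x. \<not> closure_cand m v r' A ws x \<Longrightarrow> a \<in> set ws \<union> (A - pot_win v (m - length ws) A (set ws))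
    \<Longrightarrow> r' a \<subseteq> A"
  by (auto simp: closure_cand_def)

lemma stopped_explored_closed:
  assumes "\<forall>x. \<not> closure_cand m v r' A ws x"
    and "pot_win v (m - length ws) A (set ws) - set ws = {}" "a \<in> A"
  shows "r' a \<subseteq> A"
proof -
  have "a \<in> set ws \<union> (A - pot_win v (m - length ws) A (set ws))" using assms(2,3) by blast
  then show ?thesis by (rule no_closure_cand_imp_neighbours_explored[OF assms(1)])
qed

lemma mudan_reachable_explored:
  assumes "(mudan_step m \<sigma> v r')\<^sup>*\<^sup>* (mudan_init rs) (A, ws, pay)"
    and "rs \<subseteq> B" "\<forall>i\<in>B. r' i \<subseteq> B"
  shows "rs \<subseteq> A \<and> A \<subseteq> B \<and> set ws \<subseteq> A"
  using assms(1)
proof (induction "(A, ws, pay)" arbitrary: A ws pay rule: rtranclp_induct)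
  case base
  then show ?case using assms(2) by (simp add: mudan_init_def)
next
  case (step st)
  obtain A1 ws1 pay1 where st: "st = (A1, ws1, pay1)" by (cases st)
  note IH = step.hyps(3)[OF st]
  from step.hyps(2)[unfolded st] show ?case
  proof cases
    case (closure x)
    then have "x \<in> A1" using IH by (auto simp: closure_cand_def)
    then show ?thesis using closure IH assms(3) by blast
  next
    case (add_winner w)
    then have "w \<in> A1"
      using pot_win_subset[of "set ws1" A1 v] IH by (auto simp: prio_max_def)
    then show ?thesis using add_winner IH by auto
  qed
qed

lemma mudan_reachable_last_winner:
  assumes "(mudan_step m \<sigma> v r')\<^sup>*\<^sup>* (mudan_init rs) (A, ws, pay)" "ws \<noteq> []"
  obtains A0 pay0 where "(mudan_step m \<sigma> v r')\<^sup>*\<^sup>* (mudan_init rs) (A0, butlast ws, pay0)"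
    and "\<forall>x. \<not> closure_cand m v r' A0 (butlast ws) x"
    and "last ws \<in> pot_win v (m - length (butlast ws)) A0 (set (butlast ws)) - set (butlast ws)"
proof -
  have "\<exists>A0 pay0. (mudan_step m \<sigma> v r')\<^sup>*\<^sup>* (mudan_init rs) (A0, butlast ws, pay0)
    \<and> (\<forall>x. \<not> closure_cand m v r' A0 (butlast ws) x)
    \<and> last ws \<in> pot_win v (m - length (butlast ws)) A0 (set (butlast ws)) - set (butlast ws)"
    using assms
  proof (induction "(A, ws, pay)" arbitrary: A ws pay rule: rtranclp_induct)
    case base
    then show ?case by (simp add: mudan_init_def)
  next
    case (step st)
    obtain A1 ws1 pay1 where st: "st = (A1, ws1, pay1)" by (cases st)
    from step.hyps(2)[unfolded st] show ?case
    proof cases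
      case closure
      then show ?thesis using step st by blast
    next
      case add_winner
      then show ?thesis using step.hyps(1) st by (auto simp: prio_max_def)
    qed
  qed
  then show ?thesis using that by blast
qed

lemma path_avoiding_chosen_winner_stays_explored:
  fixes v :: "'b::linorder \<Rightarrow> real"
  assumes "finite A0" "m - length ws0 \<le> 1" "rs \<subseteq> A0"
    and "\<forall>x. \<not> closure_cand m v r' A0 ws0 x"
    and "w \<in> pot_win v (m - length ws0) A0 (set ws0) - set ws0"
    and "pg_path rs r' y p" "Some w \<notin> set p"
  shows "y \<in> A0"
proof (rule pg_path_last_in_closed[OF assms(6,3)])
  fix a assume "Some a \<in> set p" "a \<in> A0"
  then have "a \<noteq> w" using assms(7) by blast
  then have "a \<in> set ws0 \<union> (A0 - pot_win v (m - length ws0) A0 (set ws0))"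
    using single_potential_winner[OF assms(1,2,5), of a] \<open>a \<in> A0\<close> by blast
  then show "r' a \<subseteq> A0" using no_closure_cand_imp_neighbours_explored[OF assms(4)] by blast
qed

theorem lemma4:
  fixes B :: "'b::linorder set" and rs :: "'b set" and r' :: "'b \<Rightarrow> 'b set"
    and v' :: "'b \<Rightarrow> real" and m :: nat and \<sigma> :: "'b set \<Rightarrow> real"
    and A :: "'b set" and ws :: "'b list" and pay :: "'b \<Rightarrow> real" and y :: 'b
  assumes "finite B" and "rs \<subseteq> B" and "\<forall>i\<in>B. r' i \<subseteq> B"
    and "\<forall>i\<in>B. v' i \<ge> 0" and "m \<ge> 1"
    and "\<forall>S T. S \<subseteq> T \<longrightarrow> \<sigma> S \<le> \<sigma> T"
    and "mudan_final m \<sigma> rs v' r' (A, ws, pay)"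
    and "ws \<noteq> []"
    and "y \<in> B" and "\<forall>w\<in>set ws. v' y > v' w"
  shows "critical rs r' (last ws) y \<and> y \<notin> Bstar B rs r' (last ws)"
proof -
  have reach: "(mudan_step m \<sigma> v' r')\<^sup>*\<^sup>* (mudan_init rs) (A, ws, pay)"
    and closed: "\<forall>x. \<not> closure_cand m v' r' A ws x"
    and stopped: "pot_win v' (m - length ws) A (set ws) - set ws = {}"
    using assms(7) by (simp_all add: mudan_final_def)
  obtain A0 pay0 where reach0: "(mudan_step m \<sigma> v' r')\<^sup>*\<^sup>* (mudan_init rs) (A0, butlast ws, pay0)"
    and closed0: "\<forall>x. \<not> closure_cand m v' r' A0 (butlast ws) x"
    and chosen: "last ws \<in> pot_win v' (m - length (butlast ws)) A0 (set (butlast ws))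
                   - set (butlast ws)"
    using mudan_reachable_last_winner[OF reach assms(8)] .
  have "rs \<subseteq> A" "finite A" "rs \<subseteq> A0" "finite A0"
    using mudan_reachable_explored[OF reach assms(2,3)] mudan_reachable_explored[OF reach0 assms(2,3)]
      finite_subset[OF _ assms(1)] by auto
  have "last ws \<in> set ws" using assms(8) by simp
  then have y_loses: "y \<notin> set ws" "y \<noteq> last ws" "val_better v' y (last ws)"
    using assms(10) by (auto simp: val_better_def)
  have "Some (last ws) \<in> set p" if path: "pg_path rs r' y p" for p
  proof (rule ccontr)
    assume avoids: "Some (last ws) \<notin> set p"
    have "y \<in> A"
      using pg_path_last_in_closed[OF path \<open>rs \<subseteq> A\<close>]
        stopped_explored_closed[OF closed stopped] by blast
    then have "m - length ws = 0"
      using pot_win_winners_only_imp_no_supply[OF \<open>finite A\<close> _ stopped] y_loses(1) by blast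
    then have one_unit_left: "m - length (butlast ws) \<le> 1" by simp
    have "y \<in> A0"
      using path_avoiding_chosen_winner_stays_explored[OF \<open>finite A0\<close> one_unit_left \<open>rs \<subseteq> A0\<close>
          closed0 chosen path avoids] .
    moreover have "y \<notin> set (butlast ws)" using y_loses(1) in_set_butlastD by fast
    ultimately show False
      using single_potential_winner[OF \<open>finite A0\<close> one_unit_left chosen, of y] y_loses(2,3) by blast
  qed
  then show ?thesis by (simp add: critical_def Bstar_def)
qed

end
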